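(* Let $r\geqslant 3$ be an odd integer and let $\Gamma\cong\mathbb{Z}_{2r}\oplus\mathbb{Z}_2\oplus\mathbb{Z}_2\oplus\mathbb{Z}_2$. Then there exists an $\mathrm{MRS}_\Gamma(r,8;2)$ in which every row sum and every column sum equals $0_\Gamma$.
   Context: For an abelian group $\Gamma$ of order $abc$, an $\mathrm{MRS}_\Gamma(a,b;c)$ is a collection of $c$ arrays of size $a\times b$ whose entries are the elements of $\Gamma$, each appearing exactly once and in a unique array, such that there are $\omega,\delta\in\Gamma$ with every row sum (in every array) equal to $\omega$ and every column sum (in every array) equal to $\delta$. *)

theory Defs
  imports "HOL-Algebra.Algebra"
begin

text \<open>A collection of c arrays of size a x b, given as A k i j (array k < c, row i < a,
  column j < b), with entries in the (abelian) group G written multiplicatively in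
  HOL-Algebra (so the group operation is the paper's +, and one is 0).\<close>
definition MRS_with ::
  "('g, 'm) monoid_scheme \<Rightarrow> nat \<Rightarrow> nat \<Rightarrow> nat \<Rightarrow> (nat \<Rightarrow> nat \<Rightarrow> nat \<Rightarrow> 'g) \<Rightarrow> 'g \<Rightarrow> 'g \<Rightarrow> bool"
where
  "MRS_with G a b c A \<omega> \<delta> \<longleftrightarrow>
     bij_betw (\<lambda>(k, i, j). A k i j) ({..<c} \<times> {..<a} \<times> {..<b}) (carrier G) \<and>
     (\<forall>k<c. \<forall>i<a. finprod G (\<lambda>j. A k i j) {..<b} = \<omega>) \<and>
     (\<forall>k<c. \<forall>j<b. finprod G (\<lambda>i. A k i j) {..<a} = \<delta>)"

definition is_MRS ::
  "('g, 'm) monoid_scheme \<Rightarrow> nat \<Rightarrow> nat \<Rightarrow> nat \<Rightarrow> (nat \<Rightarrow> nat \<Rightarrow> nat \<Rightarrow> 'g) \<Rightarrow> bool"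
where
  "is_MRS G a b c A \<longleftrightarrow> (\<exists>\<omega>\<in>carrier G. \<exists>\<delta>\<in>carrier G. MRS_with G a b c A \<omega> \<delta>)"

end

theory Submission
  imports Defs "HOL-Library.Product_Plus" "HOL-Library.Nat_Bijection"
begin

text \<open>Since r is odd, \<open>\<Gamma> \<cong> \<int>\<^sub>r \<times> \<int>\<^sub>2\<^sup>4\<close>; write its elements as pairs
  (a, v) with a an integer of absolute value below r/2 and v < 16 a vector of four bits.
  Rows 0--2 of the two arrays are a fixed table using a \<in> {-1, 0, 1} and every v, whose
  row and column sums vanish already in \<open>\<int> \<times> \<int>\<^sub>2\<^sup>4\<close>. The remaining rows come in
  pairs 2m+1, 2m+2 carrying a = \<open>\<mp>\<close>(m+1), with the sign flipped again in columns 4--7,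
  and v = 8k + j in column j of array k: each pair cancels in every column, the a-parts
  cancel along every row, and the v-parts of a row are 8k, ..., 8k+7, whose bits sum to
  zero. These cells meet every (a, v) exactly once.\<close>

lemma (in comm_monoid) finprod_additive:
  fixes \<phi> :: "'c::comm_monoid_add \<Rightarrow> 'a"
  assumes closed: "\<And>x. \<phi> x \<in> carrier G" and zero: "\<phi> 0 = \<one>"
    and add: "\<And>x y. \<phi> (x + y) = \<phi> x \<otimes> \<phi> y" and "finite I"
  shows "(\<Otimes>i\<in>I. \<phi> (f i)) = \<phi> (\<Sum>i\<in>I. f i)"
  using \<open>finite I\<close>
  by (induction I rule: finite_induct) (simp_all add: closed zero add Pi_def)

lemma bij_betw_if_inj_on_card_eq:
  assumes "inj_on f A" "f ` A \<subseteq> B" "finite B" "card A = card B"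
  shows "bij_betw f A B"
  using assms card_image card_subset_eq unfolding bij_betw_def by metis

lemma eq_if_low_bits_eq:
  fixes v w :: nat
  assumes "v < 2 ^ m" "w < 2 ^ m" "\<And>n. n < m \<Longrightarrow> bit v n \<longleftrightarrow> bit w n"
  shows "v = w"
proof -
  have "take_bit m v = take_bit m w"
    using assms(3) by (auto simp: bit_eq_iff bit_take_bit_iff)
  then show ?thesis
    using assms(1,2) by (simp add: take_bit_nat_eq_self)
qed

lemma mult_add_eq_mult_add_iff:
  fixes m x y a b :: nat
  assumes "a < m" "b < m"
  shows "m * x + a = m * y + b \<longleftrightarrow> x = y \<and> a = b"
proof
  assume eq: "m * x + a = m * y + b"
  have "x = (m * x + a) div m" "a = (m * x + a) mod m"
    "y = (m * y + b) div m" "b = (m * y + b) mod m"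
    using assms by simp_all
  with eq show "x = y \<and> a = b" by metis
qed simp

lemma int_decode_eq: "int_decode n = (if even n then int (n div 2) else - int (n div 2) - 1)"
  by (simp add: int_decode_def sum_decode_def)

lemma sum_int_decode_odd_prefix: "(\<Sum>i<2 * n + 1. int_decode i) = 0"
  by (induction n) (simp_all add: int_decode_eq)

lemma abs_int_decode_le: "2 * \<bar>int_decode n\<bar> \<le> int n + 1"
  by (simp add: int_decode_eq) presburger

lemma abs_int_decode_ge: "3 \<le> n \<Longrightarrow> 2 \<le> \<bar>int_decode n\<bar>"
  by (simp add: int_decode_eq) presburger

abbreviation \<Gamma> :: "nat \<Rightarrow> (int \<times> int \<times> int \<times> int) monoid" where
  "\<Gamma> r \<equiv> integer_mod_group (2 * r) \<times>\<times> integer_mod_group 2 \<times>\<times>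
           integer_mod_group 2 \<times>\<times> integer_mod_group 2"

lemma card_carrier_\<Gamma>: "r > 0 \<Longrightarrow> card (carrier (\<Gamma> r)) = 16 * r"
  by (simp add: carrier_integer_mod_group card_cartesian_product)

text \<open>The isomorphism \<open>\<int>\<^sub>r \<times> \<int>\<^sub>2 \<cong> \<int>\<^sub>2\<^sub>r\<close> for odd r sends (a, c) to 2a + rc;
  \<open>reduce r\<close> composes it with reduction of integer coordinates.\<close>

definition reduce ::
  "nat \<Rightarrow> int \<times> int \<times> int \<times> int \<times> int \<Rightarrow> int \<times> int \<times> int \<times> int"
where
  "reduce r = (\<lambda>(a, c\<^sub>0, c\<^sub>1, c\<^sub>2, c\<^sub>3).
     ((2 * a + int r * c\<^sub>0) mod (2 * int r), c\<^sub>1 mod 2, c\<^sub>2 mod 2, c\<^sub>3 mod 2))"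

lemma reduce_closed: "r > 0 \<Longrightarrow> reduce r x \<in> carrier (\<Gamma> r)"
  by (auto simp: reduce_def carrier_integer_mod_group split: prod.split)

lemma reduce_add: "reduce r (x + y) = reduce r x \<otimes>\<^bsub>\<Gamma> r\<^esub> reduce r y"
  by (auto simp: reduce_def algebra_simps mod_add_eq split: prod.split)

definition vanishing :: "int \<times> int \<times> int \<times> int \<times> int \<Rightarrow> bool" where
  "vanishing =
     (\<lambda>(a, c\<^sub>0, c\<^sub>1, c\<^sub>2, c\<^sub>3). a = 0 \<and> even c\<^sub>0 \<and> even c\<^sub>1 \<and> even c\<^sub>2 \<and> even c\<^sub>3)"

lemma vanishing_add: "vanishing x \<Longrightarrow> vanishing y \<Longrightarrow> vanishing (x + y)"
  by (auto simp: vanishing_def split: prod.splits)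

lemma reduce_vanishing: "vanishing x \<Longrightarrow> reduce r x = \<one>\<^bsub>\<Gamma> r\<^esub>"
  by (auto simp: vanishing_def reduce_def elim!: evenE split: prod.splits)

lemma finprod_reduce_vanishing:
  fixes G (structure)
  assumes "comm_group G" "h \<in> hom (\<Gamma> r) G" "r > 0" "finite I"
    and "vanishing (\<Sum>i\<in>I. x i)"
  shows "(\<Otimes>i\<in>I. h (reduce r (x i))) = \<one>"
proof -
  interpret comm_group G by fact
  have "group (\<Gamma> r)"
    by (intro DirProd_group group_integer_mod_group)
  then have one: "h \<one>\<^bsub>\<Gamma> r\<^esub> = \<one>"
    using hom_one[OF assms(2) _ is_group] by blast
  have "(\<Otimes>i\<in>I. h (reduce r (x i))) = h (reduce r (\<Sum>i\<in>I. x i))"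
  proof (rule finprod_additive)
    show "h (reduce r y) \<in> carrier G" for y
      using hom_in_carrier[OF assms(2) reduce_closed[OF assms(3)]] .
    show "h (reduce r 0) = \<one>"
      using one by (simp add: reduce_vanishing vanishing_def zero_prod_def)
    show "h (reduce r (y + z)) = h (reduce r y) \<otimes> h (reduce r z)" for y z
      using hom_mult[OF assms(2) reduce_closed reduce_closed] assms(3) by (simp add: reduce_add)
  qed fact
  with one show ?thesis
    by (simp add: reduce_vanishing assms(5))
qed

definition coords :: "int \<times> nat \<Rightarrow> int \<times> int \<times> int \<times> int \<times> int" where
  "coords =
     (\<lambda>(a, v). (a, of_bool (bit v 0), of_bool (bit v 1), of_bool (bit v 2), of_bool (bit v 3)))"

definition box :: "nat \<Rightarrow> (int \<times> nat) set" where
  "box r = {a. 2 * \<bar>a\<bar> < int r} \<times> {..<16}"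

lemma inj_on_reduce_coords:
  assumes "odd r" shows "inj_on (reduce r \<circ> coords) (box r)"
proof (rule inj_onI, clarify)
  fix a a' :: int and v v' :: nat
  assume "(a, v) \<in> box r" "(a', v') \<in> box r"
    and eq: "(reduce r \<circ> coords) (a, v) = (reduce r \<circ> coords) (a', v')"
  then have bounds: "2 * \<bar>a\<bar> < int r" "2 * \<bar>a'\<bar> < int r" "v < 2 ^ 4" "v' < 2 ^ 4"
    by (auto simp: box_def)
  let ?b = "\<lambda>w n. of_bool (bit w n) :: int"
  have first:
      "(2 * a + int r * ?b v 0) mod (2 * int r) = (2 * a' + int r * ?b v' 0) mod (2 * int r)"
    and high: "?b v 1 = ?b v' 1 \<and> ?b v 2 = ?b v' 2 \<and> ?b v 3 = ?b v' 3"
    using eq by (simp_all add: reduce_def coords_def)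
  have parity: "(2 * c + int r * ?b w 0) mod 2 = ?b w 0" for c and w :: nat
    using \<open>odd r\<close> by (cases "bit w 0") (simp_all, presburger)
  have "x mod (2 * int r) mod 2 = x mod 2" for x :: int
    by (simp add: mod_mod_cancel)
  then have "?b v 0 = ?b v' 0"
    using arg_cong[OF first, of "\<lambda>x. x mod 2"] parity by metis
  with high have "bit v n \<longleftrightarrow> bit v' n" if "n < 4" for n
    using that by (auto simp: numeral_eq_Suc less_Suc_eq)
  then have "v = v'"
    using bounds eq_if_low_bits_eq by blast
  with first have "2 * int r dvd 2 * (a - a')"
    by (simp add: mod_eq_dvd_iff algebra_simps)
  then have "int r dvd a - a'"
    by (simp only: dvd_mult_cancel_left) simp
  then have "a = a'"
    using bounds dvd_imp_le_int[of "a - a'" "int r"] by fastforce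
  with \<open>v = v'\<close> show "a = a' \<and> v = v'" by simp
qed

text \<open>Row i of array k occupies positions 24k + 8i, ..., 24k + 8i + 7.\<close>

definition base_cells :: "(int \<times> nat) list" where
  "base_cells =
   [(0, 0), (0, 3), (1, 1), (-1, 7), (1, 6), (-1, 6), (0, 7), (0, 2),
    (1, 0), (-1, 1), (0, 4), (0, 14), (-1, 13), (1, 11), (1, 3), (-1, 14),
    (-1, 0), (1, 2), (-1, 5), (1, 9), (0, 11), (0, 13), (-1, 4), (1, 12),
    (0, 6), (0, 9), (1, 15), (-1, 15), (1, 5), (-1, 8), (0, 10), (0, 8),
    (1, 13), (-1, 3), (0, 5), (0, 1), (-1, 9), (1, 7), (1, 8), (-1, 12),
    (-1, 11), (1, 10), (-1, 10), (1, 14), (0, 12), (0, 15), (-1, 2), (1, 4)]"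

text \<open>\<^const>\<open>int_decode\<close> enumerates 0, -1, 1, -2, 2, ..., so rows 2m+1 and 2m+2 carry
  \<open>\<mp>\<close>(m+1).\<close>

definition cell :: "nat \<Rightarrow> nat \<Rightarrow> nat \<Rightarrow> int \<times> nat" where
  "cell k i j =
     (if i < 3 then base_cells ! (24 * k + 8 * i + j)
      else ((if j < 4 then 1 else -1) * int_decode i, 8 * k + j))"

lemma base_cells_facts:
  "length base_cells = 48" "distinct base_cells"
  "\<forall>(a, v) \<in> set base_cells. \<bar>a\<bar> \<le> 1 \<and> v < 16"
  by (simp_all add: base_cells_def)

lemma cell_in_base_cells:
  "k < 2 \<Longrightarrow> i < 3 \<Longrightarrow> j < 8 \<Longrightarrow> cell k i j \<in> set base_cells"
  using base_cells_facts(1) by (simp add: cell_def)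

lemma abs_fst_cell_le_1_iff:
  assumes "k < 2" "j < 8"
  shows "\<bar>fst (cell k i j)\<bar> \<le> 1 \<longleftrightarrow> i < 3"
proof (cases "i < 3")
  case True
  then show ?thesis
    using assms cell_in_base_cells base_cells_facts(3) by fastforce
next
  case False
  then show ?thesis
    using abs_int_decode_ge[of i] by (simp add: cell_def abs_mult)
qed

lemma cell_in_box:
  assumes "odd r" "3 \<le> r" "k < 2" "i < r" "j < 8"
  shows "cell k i j \<in> box r"
proof (cases "i < 3")
  case True
  then show ?thesis
    using assms cell_in_base_cells[of k i j] base_cells_facts(3) by (fastforce simp: box_def)
next
  case False
  have "2 * \<bar>int_decode i\<bar> \<noteq> int r"
    using \<open>odd r\<close> by presburger
  then have "2 * \<bar>int_decode i\<bar> < int r"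
    using abs_int_decode_le[of i] \<open>i < r\<close> by linarith
  with False assms show ?thesis
    by (simp add: cell_def box_def abs_mult)
qed

lemma cell_inject:
  assumes bounds: "k < 2" "j < 8" "k' < 2" "j' < 8" and eq: "cell k i j = cell k' i' j'"
  shows "k = k' \<and> i = i' \<and> j = j'"
proof -
  consider "i < 3" "i' < 3" | "3 \<le> i" "3 \<le> i'" | "(i < 3) \<noteq> (i' < 3)" by linarith
  then show ?thesis
  proof cases
    case 1
    then have "24 * k + 8 * i + j = 24 * k' + 8 * i' + j'"
      using eq bounds base_cells_facts(1,2) by (simp add: cell_def nth_eq_iff_index_eq)
    then show ?thesis
      using bounds 1 mult_add_eq_mult_add_iff[of j 8 j' "3 * k + i" "3 * k' + i'"]
        mult_add_eq_mult_add_iff[of i 3 i' k k'] by simp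
  next
    case 2
    then have "8 * k + j = 8 * k' + j'"
      and a: "(if j < 4 then 1 else -1) * int_decode i = (if j' < 4 then 1 else -1) * int_decode i'"
      using eq by (simp_all add: cell_def)
    then have "k = k'" "j = j'"
      using bounds mult_add_eq_mult_add_iff[of j 8 j' k k'] by simp_all
    with a have "int_decode i = int_decode i'"
      by (simp split: if_splits)
    then have "i = i'"
      by (rule injD[OF inj_int_decode])
    with \<open>k = k'\<close> \<open>j = j'\<close> show ?thesis
      by simp
  next
    case 3
    then show ?thesis
      using eq bounds abs_fst_cell_le_1_iff by metis
  qed
qed

lemma vanishing_row:
  assumes "k < 2" shows "vanishing (\<Sum>j<8. coords (cell k i j))"
proof (cases "i < 3")
  case True
  with assms have "k = 0 \<or> k = 1" "i = 0 \<or> i = 1 \<or> i = 2" by auto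
  then show ?thesis
    by (elim disjE;
        simp add: lessThan_nat_numeral cell_def base_cells_def coords_def vanishing_def bit_0)
next
  case False
  from assms have "k = 0 \<or> k = 1" by auto
  with False show ?thesis
    by (elim disjE; simp add: lessThan_nat_numeral cell_def coords_def vanishing_def bit_0)
qed

lemma vanishing_base_column:
  assumes "k < 2" "j < 8" shows "vanishing (\<Sum>i<3. coords (cell k i j))"
proof -
  from assms have "k = 0 \<or> k = 1"
    and "j = 0 \<or> j = 1 \<or> j = 2 \<or> j = 3 \<or> j = 4 \<or> j = 5 \<or> j = 6 \<or> j = 7"
    by auto
  then show ?thesis
    by (elim disjE;
        simp add: lessThan_nat_numeral cell_def base_cells_def coords_def vanishing_def bit_0)
qed

lemma vanishing_column:
  assumes "odd r" "3 \<le> r" "k < 2" "j < 8"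
  shows "vanishing (\<Sum>i<r. coords (cell k i j))"
proof -
  have split: "{..<r} = {..<3} \<union> {3..<r}" "{..<3} \<inter> {3..<r} = {}"
    using assms(2) by auto
  have "(\<Sum>i<r. int_decode i) = 0" "(\<Sum>i<3. int_decode i) = 0"
    using sum_int_decode_odd_prefix[of "r div 2"] sum_int_decode_odd_prefix[of 1] \<open>odd r\<close>
    by simp_all
  then have decode: "(\<Sum>i\<in>{3..<r}. int_decode i) = 0"
    using split by (simp add: sum.union_disjoint)
  have "even (r - 3)"
    using assms(1,2) by presburger
  then have "vanishing (\<Sum>i\<in>{3..<r}. coords (cell k i j))"
    by (simp add: cell_def coords_def vanishing_def sum_prod decode flip: sum_distrib_left)
  then show ?thesis
    using vanishing_base_column[OF assms(3,4)] vanishing_add split by (simp add: sum.union_disjoint)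
qed

lemma bij_betw_cells:
  assumes "odd r" "3 \<le> r"
  shows "bij_betw (\<lambda>(k, i, j). reduce r (coords (cell k i j)))
           ({..<2} \<times> {..<r} \<times> {..<8}) (carrier (\<Gamma> r))"
proof (rule bij_betw_if_inj_on_card_eq)
  let ?D = "{..<2::nat} \<times> {..<r} \<times> {..<8::nat}"
  have "inj_on (\<lambda>(k, i, j). cell k i j) ?D"
    by (auto intro!: inj_onI dest: cell_inject)
  moreover have "(\<lambda>(k, i, j). cell k i j) ` ?D \<subseteq> box r"
    using cell_in_box[OF assms] by auto
  ultimately have "inj_on ((reduce r \<circ> coords) \<circ> (\<lambda>(k, i, j). cell k i j)) ?D"
    using comp_inj_on inj_on_subset[OF inj_on_reduce_coords[OF assms(1)]] by blast
  moreover have "(reduce r \<circ> coords) \<circ> (\<lambda>(k, i, j). cell k i j) =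
                 (\<lambda>(k, i, j). reduce r (coords (cell k i j)))"
    by auto
  ultimately show "inj_on (\<lambda>(k, i, j). reduce r (coords (cell k i j))) ?D"
    by simp
  show "(\<lambda>(k, i, j). reduce r (coords (cell k i j))) ` ?D \<subseteq> carrier (\<Gamma> r)"
    using reduce_closed[of r] assms(2)
    by (simp add: image_subset_iff case_prod_beta del: carrier_DirProd)
  show "finite (carrier (\<Gamma> r))"
    using assms(2) by (simp add: carrier_integer_mod_group)
  show "card ?D = card (carrier (\<Gamma> r))"
    using card_carrier_\<Gamma>[of r] assms(2)
    by (simp add: card_cartesian_product del: carrier_DirProd)
qed

theorem lemma4p10:
  fixes r :: nat and G :: "('g, 'm) monoid_scheme"
  assumes "odd r" and "r \<ge> 3"
    and "comm_group G"
    and "G \<cong> integer_mod_group (2 * r) \<times>\<times> integer_mod_group 2 \<times>\<times>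
               integer_mod_group 2 \<times>\<times> integer_mod_group 2"
  shows "\<exists>A. is_MRS G r 8 2 A \<and> MRS_with G r 8 2 A \<one>\<^bsub>G\<^esub> \<one>\<^bsub>G\<^esub>"
proof -
  interpret G: comm_group G by fact
  have "r > 0" using \<open>r \<ge> 3\<close> by simp
  obtain h where "h \<in> iso (\<Gamma> r) G"
    using G.iso_sym[OF assms(4)] unfolding is_iso_def by blast
  then have hom: "h \<in> hom (\<Gamma> r) G" and bij: "bij_betw h (carrier (\<Gamma> r)) (carrier G)"
    by (simp_all add: iso_def)
  define A where "A k i j = h (reduce r (coords (cell k i j)))" for k i j
  have "(\<lambda>(k, i, j). A k i j) = h \<circ> (\<lambda>(k, i, j). reduce r (coords (cell k i j)))"
    by (auto simp: A_def)
  then have "bij_betw (\<lambda>(k, i, j). A k i j) ({..<2} \<times> {..<r} \<times> {..<8}) (carrier G)"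
    using bij_betw_trans[OF bij_betw_cells[OF assms(1,2)] bij] by simp
  moreover have "finprod G (\<lambda>j. A k i j) {..<8} = \<one>\<^bsub>G\<^esub>" if "k < 2" for k i
    unfolding A_def
    by (rule finprod_reduce_vanishing[OF assms(3) hom \<open>r > 0\<close>])
      (simp_all add: vanishing_row that)
  moreover have "finprod G (\<lambda>i. A k i j) {..<r} = \<one>\<^bsub>G\<^esub>" if "k < 2" "j < 8" for k j
    unfolding A_def
    by (rule finprod_reduce_vanishing[OF assms(3) hom \<open>r > 0\<close>])
      (simp_all add: vanishing_column[OF assms(1,2) that])
  ultimately have "MRS_with G r 8 2 A \<one>\<^bsub>G\<^esub> \<one>\<^bsub>G\<^esub>"
    by (simp add: MRS_with_def)
  then show ?thesis
    unfolding is_MRS_def by blast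
qed

end
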